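(* For any real continuous function $f\in C(\Omega)$, $[\mathcal D,\pi(M_f)]=0$ if and only if $f-f\circ\sigma=0$. The latter implies that $f$ is constant.
   Context: $\Omega=\{0,1\}^{\mathbb N}$ with the shift $\sigma$; for $a\in\{0,1\}$, $ax=(a,x_1,\dots)$. $\mu$ is the measure of maximal entropy (uniform Bernoulli product measure), $L^2(\mu)$ the Hilbert space of square-integrable functions. Ruelle operator $L\phi(x)=\frac12(\phi(0x)+\phi(1x))$; Koopman operator $K\phi=\phi\circ\sigma$. For $f\in C(\Omega)$, $M_f$ is multiplication $g\mapsto fg$ on $L^2(\mu)$. On $\mathcal H=L^2(\mu)\times L^2(\mu)$, $\mathcal D=\begin{pmatrix}0&K\\ L&0\end{pmatrix}$ and $\pi(A)=\begin{pmatrix}A&0\\0&A\end{pmatrix}$; $[\mathcal D,\pi(A)]=\mathcal D\pi(A)-\pi(A)\mathcal D$. *)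

theory Defs
  imports "HOL-Probability.Probability"
begin

text \<open>The one-sided full shift on two symbols: \<Omega> = {0,1}^\<nat>, encoded as nat \<Rightarrow> bool
  (False = 0, True = 1), with the product of discrete topologies.\<close>

type_synonym omega = "nat \<Rightarrow> bool"

definition Omega_top :: "omega topology" where
  "Omega_top = product_topology (\<lambda>_. discrete_topology (UNIV :: bool set)) UNIV"

definition shift :: "omega \<Rightarrow> omega" where
  "shift x = (\<lambda>n. x (Suc n))"

definition pre :: "bool \<Rightarrow> omega \<Rightarrow> omega" where
  "pre a x = (\<lambda>n. case n of 0 \<Rightarrow> a | Suc m \<Rightarrow> x m)"

text \<open>measure of maximal entropy: uniform Bernoulli product measure\<close>
definition mu :: "omega measure" where
  "mu = PiM UNIV (\<lambda>_. measure_pmf (bernoulli_pmf (1/2)))"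

text \<open>L^2(mu): square integrable (measurable) representatives; operators act on
  representatives, and operator identities are understood mu-a.e.\<close>
definition L2 :: "(omega \<Rightarrow> real) set" where
  "L2 = {g. g \<in> borel_measurable mu \<and> integrable mu (\<lambda>x. (g x)\<^sup>2)}"

definition Ruelle :: "(omega \<Rightarrow> real) \<Rightarrow> (omega \<Rightarrow> real)" where
  "Ruelle \<phi> = (\<lambda>x. (\<phi> (pre False x) + \<phi> (pre True x)) / 2)"

definition Koopman :: "(omega \<Rightarrow> real) \<Rightarrow> (omega \<Rightarrow> real)" where
  "Koopman \<phi> = \<phi> \<circ> shift"

definition Mult :: "(omega \<Rightarrow> real) \<Rightarrow> (omega \<Rightarrow> real) \<Rightarrow> (omega \<Rightarrow> real)" where
  "Mult f g = (\<lambda>x. f x * g x)"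

text \<open>On H = L^2 \<times> L^2: D = [[0,K],[L,0]], \<pi>(A) = diag(A,A)\<close>
definition Dirac :: "(omega \<Rightarrow> real) \<times> (omega \<Rightarrow> real) \<Rightarrow> (omega \<Rightarrow> real) \<times> (omega \<Rightarrow> real)" where
  "Dirac v = (Koopman (snd v), Ruelle (fst v))"

definition rep :: "((omega \<Rightarrow> real) \<Rightarrow> (omega \<Rightarrow> real))
    \<Rightarrow> (omega \<Rightarrow> real) \<times> (omega \<Rightarrow> real) \<Rightarrow> (omega \<Rightarrow> real) \<times> (omega \<Rightarrow> real)" where
  "rep A v = (A (fst v), A (snd v))"

definition commutator :: "((omega \<Rightarrow> real) \<Rightarrow> (omega \<Rightarrow> real))
    \<Rightarrow> (omega \<Rightarrow> real) \<times> (omega \<Rightarrow> real) \<Rightarrow> (omega \<Rightarrow> real) \<times> (omega \<Rightarrow> real)" where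
  "commutator A v = (let a = Dirac (rep A v); b = rep A (Dirac v)
                     in (\<lambda>x. fst a x - fst b x, \<lambda>x. snd a x - snd b x))"

definition op_zero_H :: "((omega \<Rightarrow> real) \<times> (omega \<Rightarrow> real) \<Rightarrow> (omega \<Rightarrow> real) \<times> (omega \<Rightarrow> real)) \<Rightarrow> bool" where
  "op_zero_H T \<longleftrightarrow> (\<forall>g1\<in>L2. \<forall>g2\<in>L2.
      (AE x in mu. fst (T (g1, g2)) x = 0) \<and> (AE x in mu. snd (T (g1, g2)) x = 0))"

end

theory Submission
  imports Defs
begin

text \<open>Applied to the constant pair (1, 1), the commutator [D, \<pi>(M_f)] has first entry
  f \<circ> \<sigma> - f, so if it vanishes then f \<circ> \<sigma> = f almost everywhere. Every open set of \<Omega> contains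
  a cylinder, and cylinders have positive measure, so the continuous function f \<circ> \<sigma> - f then
  vanishes everywhere. Conversely, \<sigma>-invariance gives f (a x) = f x, which makes both entries of
  the commutator vanish identically. A continuous \<sigma>-invariant f is constant: if f x \<noteq> f y, some
  cylinder of length n around x avoids the level f y, yet it contains the word that follows x
  for n letters and then y, and \<sigma>^n maps this word to y.\<close>

definition cylinder :: "nat \<Rightarrow> omega \<Rightarrow> omega set" where
  "cylinder n x = {z. \<forall>i<n. z i = x i}"

lemma cylinder_eq_prod_emb:
  "cylinder n x = prod_emb UNIV (\<lambda>_. measure_pmf (bernoulli_pmf (1/2))) {..<n} (Pi\<^sub>E {..<n} (\<lambda>i. {x i}))"
  by (auto simp: cylinder_def prod_emb_iff restrict_PiE_iff)

lemma sets_mu_cylinder: "cylinder n x \<in> sets mu"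
  unfolding cylinder_eq_prod_emb mu_def by (intro sets_PiM_I) auto

lemma emeasure_mu_cylinder: "emeasure mu (cylinder n x) = ennreal ((1/2) ^ n)"
proof -
  have "emeasure mu (cylinder n x) = (\<Prod>i<n. emeasure (measure_pmf (bernoulli_pmf (1/2))) {x i})"
    unfolding cylinder_eq_prod_emb mu_def
    by (rule emeasure_PiM_emb) (auto simp: prob_space_measure_pmf)
  also have "\<dots> = (\<Prod>i<n. ennreal (1/2))"
    by (simp add: emeasure_pmf_single)
  also have "\<dots> = ennreal ((1/2) ^ n)"
    by (subst prod_ennreal) auto
  finally show ?thesis .
qed

lemma space_mu [simp]: "space mu = UNIV"
  by (simp add: mu_def space_PiM)

lemma prob_space_mu: "prob_space mu"
  unfolding mu_def by (rule prob_space_PiM) (simp add: prob_space_measure_pmf)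

lemma AE_mu_imp_ex_in_cylinder:
  assumes "AE z in mu. P z"
  shows "\<exists>z\<in>cylinder n x. P z"
proof (rule ccontr)
  assume "\<not> ?thesis"
  with assms have "AE z in mu. z \<notin> cylinder n x" by (auto elim: AE_mp)
  then have "emeasure mu (cylinder n x) = 0"
    using sets_mu_cylinder by (subst (asm) AE_iff_measurable) auto
  then show False by (simp add: emeasure_mu_cylinder)
qed

lemma topspace_Omega_top [simp]: "topspace Omega_top = UNIV"
  by (simp add: Omega_top_def topspace_product_topology)

lemma openin_Omega_top_cylinder:
  assumes "openin Omega_top U" "x \<in> U"
  obtains n where "cylinder n x \<subseteq> U"
proof -
  from assms obtain V where V: "finite {i. V i \<noteq> UNIV}" "x \<in> Pi\<^sub>E UNIV V" "Pi\<^sub>E UNIV V \<subseteq> U"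
    unfolding Omega_top_def openin_product_topology_alt by auto
  obtain n where n: "\<And>i. V i \<noteq> UNIV \<Longrightarrow> i < n"
    using finite_nat_bounded[OF V(1)] by auto
  have "cylinder n x \<subseteq> Pi\<^sub>E UNIV V"
    using n V(2) by (force simp: cylinder_def)
  with V(3) show thesis by (intro that) auto
qed

lemma continuous_map_shift: "continuous_map Omega_top Omega_top shift"
  unfolding Omega_top_def shift_def continuous_map_componentwise_UNIV
  by (auto intro: continuous_map_product_projection)

lemma continuous_AE_eq_0_imp_eq_0:
  assumes g: "continuous_map Omega_top euclideanreal g" and AE: "AE z in mu. g z = 0"
  shows "g x = 0"
proof (rule ccontr)
  assume "g x \<noteq> 0"
  then have "x \<in> {z. g z \<noteq> 0}" by simp
  moreover have "openin Omega_top {z. g z \<noteq> 0}"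
    using openin_continuous_map_preimage[OF g, of "- {0}"] by (simp add: vimage_def open_Compl)
  ultimately obtain n where "cylinder n x \<subseteq> {z. g z \<noteq> 0}"
    by (metis openin_Omega_top_cylinder)
  with AE_mu_imp_ex_in_cylinder[OF AE] show False by blast
qed

lemma funpow_shift_apply: "(shift ^^ n) x i = x (i + n)"
  by (induction n arbitrary: i) (auto simp: shift_def)

lemma shift_pre [simp]: "shift (pre a x) = x"
  by (rule ext) (simp add: shift_def pre_def)

lemma shift_invariant_funpow:
  assumes "\<And>x. f (shift x) = f x"
  shows "f ((shift ^^ n) x) = f x"
  by (induction n) (simp_all add: assms)

lemma continuous_shift_invariant_imp_constant:
  assumes f: "continuous_map Omega_top euclideanreal f" and inv: "\<And>x. f (shift x) = f x"
  shows "f x = f y"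
proof (rule ccontr)
  assume "f x \<noteq> f y"
  then have "x \<in> {z. f z \<noteq> f y}" by simp
  moreover have "openin Omega_top {z. f z \<noteq> f y}"
    using openin_continuous_map_preimage[OF f, of "- {f y}"] by (simp add: vimage_def open_Compl)
  ultimately obtain n where n: "cylinder n x \<subseteq> {z. f z \<noteq> f y}"
    by (metis openin_Omega_top_cylinder)
  define w where "w = (\<lambda>i. if i < n then x i else y (i - n))"
  have "(shift ^^ n) w = y"
    by (rule ext) (simp add: w_def funpow_shift_apply)
  then have "f w = f y"
    using shift_invariant_funpow[of f n w] inv by simp
  moreover have "w \<in> cylinder n x"
    by (simp add: cylinder_def w_def)
  ultimately show False using n by blast
qed

lemma constant_in_L2: "(\<lambda>_. c) \<in> L2"
proof -
  interpret prob_space mu by (rule prob_space_mu)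
  show ?thesis unfolding L2_def by auto
qed

lemma fst_commutator_Mult:
  "fst (commutator (Mult f) (g1, g2)) = (\<lambda>x. (f (shift x) - f x) * g2 (shift x))"
  by (auto simp: commutator_def Dirac_def rep_def Koopman_def Mult_def Let_def algebra_simps)

lemma snd_commutator_Mult:
  "snd (commutator (Mult f) (g1, g2)) =
     (\<lambda>x. ((f (pre False x) - f x) * g1 (pre False x) + (f (pre True x) - f x) * g1 (pre True x)) / 2)"
  by (auto simp: commutator_def Dirac_def rep_def Ruelle_def Mult_def Let_def field_simps)

lemma op_zero_H_commutator_Mult_imp_AE_shift_invariant:
  assumes "op_zero_H (commutator (Mult f))"
  shows "AE x in mu. f (shift x) - f x = 0"
proof -
  have "AE x in mu. fst (commutator (Mult f) (\<lambda>_. 1, \<lambda>_. 1)) x = 0"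
    using assms constant_in_L2 unfolding op_zero_H_def by blast
  then show ?thesis by (simp add: fst_commutator_Mult)
qed

lemma shift_invariant_imp_op_zero_H_commutator_Mult:
  assumes inv: "\<And>x. f (shift x) = f x"
  shows "op_zero_H (commutator (Mult f))"
proof -
  have "f (pre a x) = f x" for a x
    using inv[of "pre a x"] by simp
  then show ?thesis
    by (simp add: op_zero_H_def fst_commutator_Mult snd_commutator_Mult inv)
qed

theorem lemma2p12:
  fixes f :: "omega \<Rightarrow> real"
  assumes "continuous_map Omega_top euclideanreal f"
  shows "(op_zero_H (commutator (Mult f)) \<longleftrightarrow> (\<forall>x. f x - f (shift x) = 0))
       \<and> ((\<forall>x. f x - f (shift x) = 0) \<longrightarrow> (\<exists>c. \<forall>x. f x = c))"
proof (intro conjI impI iffI)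
  assume "op_zero_H (commutator (Mult f))"
  then have AE: "AE x in mu. f (shift x) - f x = 0"
    by (rule op_zero_H_commutator_Mult_imp_AE_shift_invariant)
  have "continuous_map Omega_top euclideanreal (f \<circ> shift)"
    using continuous_map_shift assms by (rule continuous_map_compose)
  then have "continuous_map Omega_top euclideanreal (\<lambda>x. f (shift x) - f x)"
    using assms by (intro continuous_map_diff) (simp_all add: o_def)
  from continuous_AE_eq_0_imp_eq_0[OF this AE] show "\<forall>x. f x - f (shift x) = 0"
    by simp
next
  assume "\<forall>x. f x - f (shift x) = 0"
  then show "op_zero_H (commutator (Mult f))"
    by (intro shift_invariant_imp_op_zero_H_commutator_Mult) simp
next
  assume "\<forall>x. f x - f (shift x) = 0"
  then have "f x = f y" for x y
    using continuous_shift_invariant_imp_constant[OF assms] by simp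
  then show "\<exists>c. \<forall>x. f x = c" by blast
qed

end
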